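(* Let $q$ be a prime power for which there exist $a,b\in\mathbb F_q^*$ and integers $0<m<n<q$ such that $f(x)=ax^m+bx^n$ permutes $\mathbb F_q$. Then, for any generator $w$ of $\mathbb F_q^*$, the group $G(q)$ contains the permutation of $\mathbb F_q^*$ induced by $c\mapsto wc$, and this permutation is a $(q-1)$-cycle.
   Context: $\mathbb F_q$ is the field with $q$ elements, $\mathbb F_q^*$ its multiplicative group. A polynomial permutes $\mathbb F_q$ if the induced map on $\mathbb F_q$ is a bijection. $G(q)$ denotes the group of permutations of $\mathbb F_q^*$ generated by all permutations of $\mathbb F_q^*$ which can be represented as $c\mapsto ac^m+bc^n$ with $a,b\in\mathbb F_q^*$ and integers $0<m<n<q$. *)

theory Defs
  imports Main "HOL-Library.Cardinality" "HOL-Combinatorics.Cycles" "HOL-Combinatorics.Permutations"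
begin

text \<open>Permutations of F_q^* are represented as maps on the field permuting
  the set of nonzero elements (and fixing 0), i.e. p permutes (UNIV - {0}).\<close>

definition binom_perms :: "('a::{finite,field} \<Rightarrow> 'a) set" where
  "binom_perms = {f. (\<exists>a b (m::nat) (n::nat). a \<noteq> 0 \<and> b \<noteq> 0 \<and> 0 < m \<and> m < n \<and> n < CARD('a)
      \<and> f = (\<lambda>c. a * c ^ m + b * c ^ n)) \<and> (f permutes (UNIV - {0}))}"

inductive_set G :: "('a::{finite,field} \<Rightarrow> 'a) set" where
  G_id: "id \<in> G"
| G_mult: "f \<in> binom_perms \<Longrightarrow> g \<in> G \<Longrightarrow> f \<circ> g \<in> G"
| G_inv: "f \<in> binom_perms \<Longrightarrow> g \<in> G \<Longrightarrow> inv f \<circ> g \<in> G"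

end

theory Submission
  imports Defs
begin

text \<open>If \<open>f = a x\<^sup>m + b x\<^sup>n\<close> permutes \<open>\<bbbF>\<^sub>q\<close>, then so does \<open>w f = (w a) x\<^sup>m + (w b) x\<^sup>n\<close>,
  hence multiplication by \<open>w\<close> is the quotient \<open>(w f) \<circ> f\<inverse>\<close> of two generators of \<open>G(q)\<close>.
  If \<open>w\<close> generates \<open>\<bbbF>\<^sub>q\<^sup>*\<close>, the orbit of \<open>1\<close> under \<open>c \<mapsto> w c\<close> is all of \<open>\<bbbF>\<^sub>q\<^sup>*\<close>, so this
  permutation is the single cycle traced out by that orbit.\<close>

lemma bij_fixing_zero_permutes_nonzero:
  fixes h :: "'a::zero \<Rightarrow> 'a"
  assumes "bij h" and "h 0 = 0"
  shows "h permutes (UNIV - {0})"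
  unfolding permutes_def
proof (intro conjI allI impI)
  show "h x = x" if "x \<notin> UNIV - {0}" for x
    using that assms(2) by simp
  show "\<exists>!x. h x = y" for y
    using assms(1) by (metis bij_pointE)
qed

lemma binomial_in_binom_perms:
  fixes a b :: "'a::{finite,field}"
  assumes "a \<noteq> 0" "b \<noteq> 0" "0 < m" "m < n" "n < CARD('a)"
    and "bij (\<lambda>x. a * x ^ m + b * x ^ n)"
  shows "(\<lambda>x. a * x ^ m + b * x ^ n) \<in> binom_perms"
proof -
  have "(\<lambda>x::'a. a * x ^ m + b * x ^ n) 0 = 0"
    using assms(3,4) by (simp add: power_0_left)
  then show ?thesis
    unfolding binom_perms_def
    using assms bij_fixing_zero_permutes_nonzero by blast
qed

lemma comp_inv_in_G:
  assumes "f \<in> binom_perms" and "g \<in> binom_perms"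
  shows "g \<circ> inv f \<in> G"
  using G_mult[OF assms(2) G_inv[OF assms(1) G_id]] by simp

lemma bij_mult_left_nonzero:
  fixes w :: "'a::{finite,field}"
  assumes "w \<noteq> 0"
  shows "bij (\<lambda>c. w * c)"
  using assms finite_UNIV_inj_surj[of "(*) w"] by (simp add: bij_def)

lemma mult_left_in_G:
  fixes w a b :: "'a::{finite,field}"
  assumes "a \<noteq> 0" "b \<noteq> 0" "0 < m" "m < n" "n < CARD('a)"
    and bij_f: "bij (\<lambda>x. a * x ^ m + b * x ^ n)" and "w \<noteq> 0"
  shows "(\<lambda>c. w * c) \<in> G"
proof -
  define f where "f = (\<lambda>x::'a. a * x ^ m + b * x ^ n)"
  have scaled: "(\<lambda>x. (w * a) * x ^ m + (w * b) * x ^ n) = (\<lambda>c. w * c) \<circ> f"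
    by (auto simp: f_def algebra_simps)
  have "bij ((\<lambda>c. w * c) \<circ> f)"
    using bij_f bij_mult_left_nonzero[OF \<open>w \<noteq> 0\<close>] by (simp add: f_def bij_comp)
  then have "(\<lambda>c. w * c) \<circ> f \<in> binom_perms"
    using binomial_in_binom_perms[of "w * a" "w * b" m n] assms by (simp add: scaled)
  moreover have "f \<in> binom_perms"
    using binomial_in_binom_perms assms by (simp add: f_def)
  ultimately have "(\<lambda>c. w * c) \<circ> f \<circ> inv f \<in> G"
    using comp_inv_in_G by blast
  moreover have "f \<circ> inv f = id"
    using surj_iff bij_is_surj bij_f unfolding f_def by blast
  ultimately show ?thesis
    by (simp add: comp_assoc)
qed

lemma permutation_eq_cycle_of_support:
  assumes "permutation p"
    and fixed: "\<And>b. b \<notin> range (\<lambda>i. (p ^^ i) a) \<Longrightarrow> p b = b"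
  shows "p = cycle_of_list (support p a)"
proof
  fix b
  show "p b = cycle_of_list (support p a) b"
  proof (cases "b \<in> set (support p a)")
    case True
    then show ?thesis
      using cycle_restrict[OF assms(1)] by blast
  next
    case False
    then show ?thesis
      using fixed id_outside_supp support_set[OF assms(1)] by metis
  qed
qed

lemma funpow_mult_left: "((\<lambda>c. w * c) ^^ i) c = w ^ i * (c :: 'a::monoid_mult)"
  by (induction i) (simp_all add: mult.assoc)

lemma mult_left_generator_is_cycle:
  fixes w :: "'a::{finite,field}"
  assumes "w \<noteq> 0" and gen: "{w ^ k | k. True} = UNIV - {0}"
  shows "\<exists>cs. distinct cs \<and> length cs = CARD('a) - 1 \<and> (\<lambda>c. w * c) = cycle_of_list cs"
proof -
  let ?p = "\<lambda>c::'a. w * c"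
  have perm: "permutation ?p"
    using bij_mult_left_nonzero[OF assms(1)] by (simp add: permutation)
  have orbit: "range (\<lambda>i. (?p ^^ i) 1) = UNIV - {0}"
    using gen by (auto simp: funpow_mult_left)
  have cycle: "?p = cycle_of_list (support ?p 1)"
    by (rule permutation_eq_cycle_of_support[OF perm]) (use orbit in auto)
  have "distinct (support ?p 1)"
    by (rule cycle_of_permutation[OF perm])
  moreover have "length (support ?p 1) = CARD('a) - 1"
    using distinct_card[OF \<open>distinct (support ?p 1)\<close>] support_set[OF perm] orbit
    by (simp add: card_Diff_singleton)
  ultimately show ?thesis
    using cycle by blast
qed

theorem lemma4p1:
  fixes w :: "'a::{finite,field}"
  assumes "\<exists>(a::'a) (b::'a) (m::nat) (n::nat). a \<noteq> 0 \<and> b \<noteq> 0 \<and> 0 < m \<and> m < n \<and> n < CARD('a)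
             \<and> bij (\<lambda>x. a * x ^ m + b * x ^ n)"
    and "w \<noteq> 0" and "{w ^ k | k. True} = UNIV - {0}"
  shows "(\<lambda>c. w * c) \<in> (G :: ('a \<Rightarrow> 'a) set)
     \<and> (\<exists>cs. distinct cs \<and> length cs = CARD('a) - 1 \<and> (\<lambda>c. w * c) = cycle_of_list cs)"
proof
  show "(\<lambda>c. w * c) \<in> (G :: ('a \<Rightarrow> 'a) set)"
    using assms(1,2) mult_left_in_G by metis
  show "\<exists>cs. distinct cs \<and> length cs = CARD('a) - 1 \<and> (\<lambda>c. w * c) = cycle_of_list cs"
    using mult_left_generator_is_cycle[OF assms(2,3)] .
qed

end
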